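(* For every even integer $k\geq 4$, $$\nu_2\!\left((-1)^{k/2} + \binom{k}{k/2-1}\right) = \begin{cases} 1 & \text{if } k+2 = 2^{\ell} \text{ for some integer } \ell \geq 3,\\ 0 & \text{otherwise.}\end{cases}$$
   Context: For a prime $p$ and nonzero integer $m$, $\nu_p(m)$ denotes the exponent of the highest power of $p$ dividing $m$; this is extended to $\mathbb{Q}$ by $\nu_p(a/b)=\nu_p(a)-\nu_p(b)$ and $\nu_p(0)=\infty$. *)

theory Defs
  imports "HOL-Computational_Algebra.Computational_Algebra"
begin

end

theory Submission
  imports Defs "HOL-Number_Theory.Cong"
begin

text \<open>Write \<open>k = 2 m\<close>. By Lucas's theorem for the prime 2, \<open>C(2m, m - 1)\<close> is odd exactly when
  \<open>m + 1\<close> is a power of two, i.e. when \<open>k + 2\<close> is; otherwise \<open>(-1)^m + C(2m, m - 1)\<close> is odd.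
  If \<open>k = 2^l - 2\<close>, then \<open>C(2^l - 1, r) \<equiv> (-1)^r\<close> modulo 4 for \<open>r < 2^(l - 1)\<close>, and by Pascal's
  rule \<open>C(2^l - 2, r) \<equiv> (-1)^r (r + 1)\<close>; at \<open>r = m - 1\<close> this gives
  \<open>(-1)^m + C(k, m - 1) \<equiv> m - 1 \<equiv> 2\<close> modulo 4.\<close>

lemma even_binomial_double_odd: "even ((2 * n) choose (2 * j + 1))"
proof -
  have "Suc (2 * j) * ((2 * n) choose Suc (2 * j)) = 2 * n * ((2 * n - 1) choose (2 * j))"
    by (rule binomial_absorption)
  then have "even (Suc (2 * j) * ((2 * n) choose Suc (2 * j)))" by simp
  then show ?thesis by simp
qed

lemma even_binomial_double_double_iff:
  "even ((2 * n) choose (2 * j)) \<longleftrightarrow> even (n choose j)"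
proof (induction n arbitrary: j)
  case 0
  then show ?case by (cases j) auto
next
  case (Suc n)
  show ?case
  proof (cases j)
    case 0
    then show ?thesis by simp
  next
    case (Suc i)
    have "(2 * Suc n) choose (2 * j) = ((2 * n) choose (2 * i)) + 2 * ((2 * n) choose (2 * i + 1))
        + ((2 * n) choose (2 * Suc i))"
      using Suc by (simp add: numeral_2_eq_2)
    then have "even ((2 * Suc n) choose (2 * j))
        \<longleftrightarrow> even (((2 * n) choose (2 * i)) + ((2 * n) choose (2 * Suc i)))"
      by simp
    also have "\<dots> \<longleftrightarrow> even ((n choose i) + (n choose Suc i))"
      using Suc.IH[of i] Suc.IH[of "Suc i"] by auto
    finally show ?thesis
      using Suc by simp
  qed
qed

lemma odd_binomial_iff_div_two:
  "odd (n choose j) \<longleftrightarrow> odd ((n div 2) choose (j div 2)) \<and> (odd j \<longrightarrow> odd n)"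
proof -
  obtain p where n: "n = 2 * p \<or> n = 2 * p + 1" by (metis oddE evenE)
  obtain i where j: "j = 2 * i \<or> j = 2 * i + 1" by (metis oddE evenE)
  have odd_odd: "even ((2 * p + 1) choose (2 * i + 1)) \<longleftrightarrow> even (p choose i)"
    using even_binomial_double_double_iff[of p i] even_binomial_double_odd[of p i] by simp
  have odd_even: "even ((2 * p + 1) choose (2 * i)) \<longleftrightarrow> even (p choose i)"
  proof (cases i)
    case (Suc i')
    have "(2 * p + 1) choose (2 * i) = ((2 * p) choose (2 * i)) + ((2 * p) choose (2 * i' + 1))"
      using Suc by simp
    then show ?thesis
      using even_binomial_double_double_iff[of p i] even_binomial_double_odd[of p i'] by simp
  qed simp
  from n j show ?thesis
    using even_binomial_double_double_iff[of p i] even_binomial_double_odd[of p i] odd_odd odd_even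
    by auto
qed

lemma even_central_binomial: "0 < n \<Longrightarrow> even ((2 * n) choose n)"
proof -
  assume "0 < n"
  then obtain c where c: "n = Suc c" by (cases n) auto
  have "(2 * n) choose n = ((2 * c + 1) choose c) + ((2 * c + 1) choose Suc c)"
    using c by simp
  also have "(2 * c + 1) choose Suc c = (2 * c + 1) choose c"
    using central_binomial_odd[of "2 * c + 1"] by simp
  finally show ?thesis by simp
qed

lemma double_eq_power_of_two_iff:
  "(\<exists>j. 2 * n = 2 ^ j) \<longleftrightarrow> (\<exists>j. n = (2::nat) ^ j)"
proof
  assume "\<exists>j. 2 * n = 2 ^ j"
  then obtain j where j: "2 * n = 2 ^ j" by blast
  then obtain i where "j = Suc i" by (cases j) auto
  with j show "\<exists>j. n = 2 ^ j" by auto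
next
  assume "\<exists>j. n = 2 ^ j"
  then show "\<exists>j. 2 * n = 2 ^ j" by (metis power_Suc)
qed

lemma odd_not_power_of_two:
  assumes "odd n" "1 < n"
  shows "\<nexists>j. n = (2::nat) ^ j"
proof
  assume "\<exists>j. n = 2 ^ j"
  then obtain j where "n = 2 ^ j" by blast
  with assms show False by (cases j) auto
qed

lemma odd_binomial_Suc_double_iff: "odd ((2 * a + 1) choose a) \<longleftrightarrow> (\<exists>j. a + 1 = 2 ^ j)"
proof (induction a rule: less_induct)
  case (less a)
  consider "a = 0" | b where "a = 2 * b + 1" | b where "a = 2 * b" "0 < b"
    by (metis oddE evenE neq0_conv mult_0_right)
  then show ?case
  proof cases
    case 1
    then show ?thesis by (auto intro: exI[of _ 0])
  next
    case (2 b)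
    have "odd ((2 * a + 1) choose a) \<longleftrightarrow> odd ((2 * b + 1) choose b)"
      using odd_binomial_iff_div_two[of "2 * a + 1" a] 2 by simp
    also have "\<dots> \<longleftrightarrow> (\<exists>j. b + 1 = 2 ^ j)"
      using less.IH[of b] 2 by simp
    also have "\<dots> \<longleftrightarrow> (\<exists>j. 2 * (b + 1) = 2 ^ j)"
      by (rule double_eq_power_of_two_iff[symmetric])
    finally show ?thesis
      using 2 by (simp add: algebra_simps)
  next
    case (3 b)
    have "even ((2 * a + 1) choose a)"
      using odd_binomial_iff_div_two[of "2 * a + 1" a] even_central_binomial[of b] 3 by simp
    moreover have "\<nexists>j. a + 1 = 2 ^ j"
      using 3 by (intro odd_not_power_of_two) auto
    ultimately show ?thesis by simp
  qed
qed

lemma odd_binomial_double_pred_iff: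
  assumes "0 < m"
  shows "odd ((2 * m) choose (m - 1)) \<longleftrightarrow> (\<exists>j. m + 1 = 2 ^ j)"
proof (cases "even m")
  case True
  have "even ((2 * m) choose (m - 1))"
    using odd_binomial_iff_div_two[of "2 * m" "m - 1"] True assms by simp
  moreover have "\<nexists>j. m + 1 = 2 ^ j"
    using True assms by (intro odd_not_power_of_two) auto
  ultimately show ?thesis by simp
next
  case False
  then obtain a where a: "m = 2 * a + 1" by (metis oddE)
  have "odd ((2 * m) choose (m - 1)) \<longleftrightarrow> odd ((2 * a + 1) choose a)"
    using odd_binomial_iff_div_two[of "2 * m" "m - 1"] a by simp
  also have "\<dots> \<longleftrightarrow> (\<exists>j. a + 1 = 2 ^ j)"
    by (rule odd_binomial_Suc_double_iff)
  also have "\<dots> \<longleftrightarrow> (\<exists>j. 2 * (a + 1) = 2 ^ j)"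
    by (rule double_eq_power_of_two_iff[symmetric])
  finally show ?thesis
    using a by (simp add: algebra_simps)
qed

text \<open>Writing \<open>r + 1 = 2 ^ s * u\<close> with \<open>u\<close> odd, the ratio
  \<open>(2 ^ (l + 1) - 1 - r) / (r + 1) = (2 ^ (l + 1 - s) - u) / u\<close> of consecutive coefficients
  is \<open>-1\<close> modulo 4 as long as \<open>s < l\<close>.\<close>

lemma binomial_power_of_two_minus_one_Suc_cong:
  assumes "Suc r < 2 ^ l"
  shows "[int ((2 ^ (l + 1) - 1) choose Suc r) = - int ((2 ^ (l + 1) - 1) choose r)] (mod 4)"
proof -
  define N :: nat where "N = 2 ^ (l + 1)"
  define c where "c = int ((N - 1) choose r)"
  define c' where "c' = int ((N - 1) choose Suc r)"
  obtain s u where su: "Suc r = 2 ^ s * u" "odd u"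
    using multiplicity_decompose'[of "Suc r" 2] by (metis Suc_neq_Zero odd_one)
  then have "2 ^ s \<le> Suc r"
    by (cases u) auto
  then have "(2::nat) ^ s < 2 ^ l"
    using assms by linarith
  then have "s < l"
    by simp
  then obtain t where "l = Suc (s + t)"
    using less_iff_Suc_add by blast
  then have N: "int N = 2 ^ s * (4 * 2 ^ t)"
    unfolding N_def by (simp add: power_add)
  have "Suc r * ((N - 1) choose Suc r) = (N - 1 - r) * ((N - 1) choose r)"
    using binomial_absorption[of r "N - 1"] binomial_absorb_comp[of "N - 1" r] by simp
  moreover have "Suc r \<le> N"
    using assms unfolding N_def by simp
  ultimately have "int (Suc r) * c' = (int N - int (Suc r)) * c"
    unfolding c_def c'_def by (metis of_nat_mult of_nat_diff diff_Suc_eq_diff_pred)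
  then have "2 ^ s * (int u * c') = 2 ^ s * ((4 * 2 ^ t - int u) * c)"
    using su N by (simp add: algebra_simps)
  then have "int u * c' = (4 * 2 ^ t - int u) * c"
    by simp
  then have "int u * (c' + c) = 4 * (2 ^ t * c)"
    by (simp add: algebra_simps)
  then have "4 dvd int u * (c' + c)"
    by simp
  moreover have "coprime 4 (int u)"
    using su(2) coprime_power_left_iff[of 2 2 "int u"] by simp
  ultimately have "4 dvd c' + c"
    using coprime_dvd_mult_right_iff by blast
  then show ?thesis
    unfolding c_def c'_def N_def by (simp add: cong_iff_dvd_diff)
qed

lemma binomial_power_of_two_minus_one_cong:
  "r < 2 ^ l \<Longrightarrow> [int ((2 ^ (l + 1) - 1) choose r) = (-1) ^ r] (mod 4)"
proof (induction r)
  case 0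
  then show ?case by simp
next
  case (Suc r)
  have "[int ((2 ^ (l + 1) - 1) choose Suc r) = - int ((2 ^ (l + 1) - 1) choose r)] (mod 4)"
    using Suc.prems by (rule binomial_power_of_two_minus_one_Suc_cong)
  also have "[- int ((2 ^ (l + 1) - 1) choose r) = (-1) ^ Suc r] (mod 4)"
    using Suc by (simp add: cong_minus_minus_iff)
  finally show ?case .
qed

lemma binomial_power_of_two_minus_two_cong:
  "r < 2 ^ l \<Longrightarrow> [int ((2 ^ (l + 1) - 2) choose r) = (-1) ^ r * (int r + 1)] (mod 4)"
proof (induction r)
  case 0
  then show ?case by simp
next
  case (Suc r)
  define N :: nat where "N = 2 ^ (l + 1)"
  have "2 \<le> N"
    unfolding N_def using one_le_power[of 2 l] by simp
  then have "N - 1 = Suc (N - 2)"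
    by simp
  then have "int ((N - 2) choose Suc r) = int ((N - 1) choose Suc r) - int ((N - 2) choose r)"
    by simp
  also have "[\<dots> = (-1) ^ Suc r - (-1) ^ r * (int r + 1)] (mod 4)"
    using Suc binomial_power_of_two_minus_one_cong[of "Suc r" l] unfolding N_def
    by (intro cong_diff) simp_all
  also have "(-1) ^ Suc r - (-1) ^ r * (int r + 1) = (-1) ^ Suc r * (int (Suc r) + 1)"
    by (simp add: algebra_simps)
  finally show ?case
    unfolding N_def .
qed

lemma multiplicity_two_eq_one: "(x::int) mod 4 = 2 \<Longrightarrow> multiplicity 2 x = 1"
proof (rule multiplicity_eqI)
  assume "x mod 4 = 2"
  then show "2 ^ 1 dvd x" "\<not> 2 ^ Suc 1 dvd x"
    by (simp_all add: dvd_eq_mod_eq_0 mod_mod_cancel[of 2 4 x, symmetric])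
qed

lemma power_of_two_double_plus_two_iff:
  fixes m :: nat
  assumes "2 \<le> m"
  shows "(\<exists>l::nat. l \<ge> 3 \<and> 2 * m + 2 = 2 ^ l) \<longleftrightarrow> (\<exists>j. m + 1 = 2 ^ j)"
proof -
  have "2 ^ 2 < (2::nat) ^ l" if "2 * (m + 1) = 2 ^ l" for l
    using assms that by simp
  then have "(\<exists>l::nat. l \<ge> 3 \<and> 2 * m + 2 = 2 ^ l) \<longleftrightarrow> (\<exists>l. 2 * (m + 1) = 2 ^ l)"
    using power_less_imp_less_exp[of 2 2] by fastforce
  also have "\<dots> \<longleftrightarrow> (\<exists>j. m + 1 = 2 ^ j)"
    by (rule double_eq_power_of_two_iff)
  finally show ?thesis .
qed

lemma neg_one_power_plus_binomial_mod_four: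
  fixes m :: nat
  assumes "m + 1 = 2 ^ j" and "2 \<le> m"
  shows "((-1) ^ m + int ((2 * m) choose (m - 1))) mod 4 = 2"
proof -
  have "2 ^ 1 < (2::nat) ^ j"
    using assms by simp
  then have "2 \<le> j"
    using power_less_imp_less_exp[of "2::nat" 1 j] by simp
  then have "4 dvd m + 1"
    using assms(1) le_imp_power_dvd[of 2 j 2] by simp
  then have m_mod: "m mod 4 = 3" and "odd m"
    by presburger+
  have "2 ^ (j + 1) - 2 = 2 * m" "m - 1 < 2 ^ j"
    using assms(1) by auto
  then have "[int ((2 * m) choose (m - 1)) = (-1) ^ (m - 1) * (int (m - 1) + 1)] (mod 4)"
    using binomial_power_of_two_minus_two_cong[of "m - 1" j] by simp
  also have "(-1) ^ (m - 1) * (int (m - 1) + 1) = int m"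
    using \<open>odd m\<close> assms(2) by simp
  finally have "[(-1) ^ m + int ((2 * m) choose (m - 1)) = -1 + int m] (mod 4)"
    using \<open>odd m\<close> by (simp add: cong_diff)
  moreover have "(-1 + int m) mod 4 = 2"
    using m_mod by presburger
  ultimately show ?thesis
    by (simp add: cong_def)
qed

theorem lemma3p1:
  fixes k :: nat
  assumes "even k" and "k \<ge> 4"
  shows "multiplicity (2::int) ((-1) ^ (k div 2) + int (k choose (k div 2 - 1))) =
         (if (\<exists>l::nat. l \<ge> 3 \<and> k + 2 = 2 ^ l) then 1 else 0)"
proof -
  obtain m where k: "k = 2 * m" and m: "m \<ge> 2"
    using assms by (elim evenE) auto
  note power_iff = power_of_two_double_plus_two_iff[OF m]
  show ?thesis
  proof (cases "\<exists>j. m + 1 = 2 ^ j")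
    case True
    then obtain j where "m + 1 = 2 ^ j" by blast
    then have "((-1) ^ m + int ((2 * m) choose (m - 1))) mod 4 = 2"
      using m by (rule neg_one_power_plus_binomial_mod_four)
    then show ?thesis
      using multiplicity_two_eq_one True power_iff k by simp
  next
    case False
    then have "even ((2 * m) choose (m - 1))"
      using odd_binomial_double_pred_iff[of m] m by simp
    then have "\<not> 2 dvd (-1) ^ m + int ((2 * m) choose (m - 1))"
      by simp
    then have "multiplicity 2 ((-1) ^ m + int ((2 * m) choose (m - 1))) = 0"
      by (rule not_dvd_imp_multiplicity_0)
    then show ?thesis
      using False power_iff k by simp
  qed
qed

end
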